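(* Let $A, B, C, F \in \mathbb{R}^{n\times n}$ with $A$ invertible, and suppose $\rho\left(\lvert CA^{-1}B\rvert\right) < 1$. Then the matrix equation $$AX + B\lvert CX\rvert = F$$ has exactly one solution $X \in \mathbb{R}^{n\times n}$.
   Context: $\rho(\cdot)$ is the spectral radius and $\lvert M\rvert$ the entrywise absolute value of a matrix $M$. *)

theory Defs
  imports "Jordan_Normal_Form.Spectral_Radius"
begin

definition abs_mat :: "real mat \<Rightarrow> real mat" where
  "abs_mat M = map_mat abs M"

definition real_spectral_radius :: "real mat \<Rightarrow> real" where
  "real_spectral_radius M = spectral_radius (map_mat complex_of_real M)"

end

theory Submission
  imports Defs
begin

text \<open>
  As \<open>A\<close> is invertible, \<open>X\<close> solves \<open>A X + B \<bar>C X\<bar> = F\<close> iff \<open>X = A\<^sup>-\<^sup>1 (F - B \<bar>C X\<bar>)\<close>.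
  Hence \<open>Z = C X\<close> is a fixed point of \<open>T Z = C A\<^sup>-\<^sup>1 F - M \<bar>Z\<bar>\<close> with \<open>M = C A\<^sup>-\<^sup>1 B\<close>, and
  conversely every fixed point \<open>Z\<close> yields the solution \<open>A\<^sup>-\<^sup>1 (F - B \<bar>Z\<bar>)\<close>.
  The map \<open>T\<close> is an entrywise contraction, \<open>\<bar>T X - T Y\<bar> \<le> \<bar>M\<bar> \<bar>X - Y\<bar>\<close>, and since
  \<open>\<rho>(\<bar>M\<bar>) < 1\<close> the entries of \<open>\<bar>M\<bar>\<^sup>k\<close> decay geometrically. So the Picard iterates of \<open>T\<close>
  converge, and any two fixed points coincide.
\<close>

lemma pow_smult_mat:
  fixes A :: "'a :: comm_semiring_1 mat"
  assumes A: "A \<in> carrier_mat n n"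
  shows "(s \<cdot>\<^sub>m A) ^\<^sub>m k = s ^ k \<cdot>\<^sub>m A ^\<^sub>m k"
proof (induction k)
  case (Suc k)
  have "(s \<cdot>\<^sub>m A) ^\<^sub>m Suc k = s ^ k \<cdot>\<^sub>m (A ^\<^sub>m k * (s \<cdot>\<^sub>m A))"
    using Suc A by (simp add: mult_smult_assoc_mat[OF pow_carrier_mat[OF A] smult_carrier_mat[OF A]])
  also have "\<dots> = s ^ Suc k \<cdot>\<^sub>m A ^\<^sub>m Suc k"
    using A by (auto simp: mult_smult_distrib mult_ac intro!: eq_matI)
  finally show ?case .
qed (use A in auto)

lemma eigenvalue_smult_div:
  fixes A :: "'a :: field mat"
  assumes A: "A \<in> carrier_mat n n" and s: "s \<noteq> 0" and ev: "eigenvalue (s \<cdot>\<^sub>m A) \<mu>"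
  shows "eigenvalue A (\<mu> / s)"
proof -
  from ev A obtain v where v: "v \<in> carrier_vec n" "v \<noteq> 0\<^sub>v n" "(s \<cdot>\<^sub>m A) *\<^sub>v v = \<mu> \<cdot>\<^sub>v v"
    unfolding eigenvalue_def eigenvector_def by auto
  have "A *\<^sub>v v = (\<mu> / s) \<cdot>\<^sub>v v"
  proof (rule eq_vecI)
    fix i assume i: "i < dim_vec ((\<mu> / s) \<cdot>\<^sub>v v)"
    have "s * (A *\<^sub>v v) $ i = \<mu> * v $ i"
      using arg_cong[OF v(3), of "\<lambda>w. w $ i"] i A v(1)
      by (auto simp: scalar_prod_def sum_distrib_left mult.assoc)
    with i s show "(A *\<^sub>v v) $ i = ((\<mu> / s) \<cdot>\<^sub>v v) $ i"
      by (auto simp: field_simps)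
  qed (use A v in auto)
  with v A show ?thesis unfolding eigenvalue_def eigenvector_def by auto
qed

lemma spectral_radius_smult_le:
  assumes A: "A \<in> carrier_mat n n" and n: "n > 0" and s: "s > 0"
  shows "spectral_radius (complex_of_real s \<cdot>\<^sub>m A) \<le> s * spectral_radius A"
proof -
  have sA: "complex_of_real s \<cdot>\<^sub>m A \<in> carrier_mat n n" using A by simp
  obtain \<mu> where \<mu>: "eigenvalue (complex_of_real s \<cdot>\<^sub>m A) \<mu>"
    and radius: "spectral_radius (complex_of_real s \<cdot>\<^sub>m A) = norm \<mu>"
    using spectral_radius_mem_max(1)[OF sA n] unfolding spectrum_def by auto
  have "eigenvalue A (\<mu> / complex_of_real s)"
    using eigenvalue_smult_div[OF A _ \<mu>] s by simp
  then have "norm (\<mu> / complex_of_real s) \<le> spectral_radius A"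
    using spectral_radius_mem_max(2)[OF A n] unfolding spectrum_def by blast
  with s radius show ?thesis by (simp add: norm_divide field_simps)
qed

lemma spectral_radius_less_1_powers_decay:
  fixes A :: "complex mat"
  assumes A: "A \<in> carrier_mat n n" and radius: "spectral_radius A < 1"
  shows "\<exists>c r. 0 \<le> r \<and> r < 1 \<and> (\<forall>k. norm_bound (A ^\<^sub>m k) (c * r ^ k))"
proof (cases "n = 0")
  case True
  with A show ?thesis by (intro exI[of _ 0] exI[of _ 0]) (auto simp: norm_bound_def)
next
  case False
  define \<rho> where "\<rho> = spectral_radius A"
  have "\<rho> \<ge> 0"
    using spectral_radius_mem_max(1)[OF A] False unfolding \<rho>_def by force
  \<comment> \<open>For \<open>s > 1\<close> with \<open>s \<rho> < 1\<close> the powers of \<open>s A\<close> are bounded,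
    so those of \<open>A\<close> decay like \<open>s\<^sup>-\<^sup>k\<close>.\<close>
  define s where "s = 2 / (1 + \<rho>)"
  have s: "s > 1" "s * \<rho> < 1"
    using \<open>\<rho> \<ge> 0\<close> radius unfolding s_def \<rho>_def by (auto simp: field_simps)
  have "spectral_radius (complex_of_real s \<cdot>\<^sub>m A) < 1"
    using spectral_radius_smult_le[OF A _, of s] False s unfolding \<rho>_def by force
  then obtain c where c: "\<And>k. norm_bound ((complex_of_real s \<cdot>\<^sub>m A) ^\<^sub>m k) c"
    using spectral_radius_jnf_norm_bound_less_1_upper_triangular[OF smult_carrier_mat[OF A]] by blast
  have "norm_bound (A ^\<^sub>m k) (c * (1 / s) ^ k)" for k
  proof
    fix i j assume "i < dim_row (A ^\<^sub>m k)" "j < dim_col (A ^\<^sub>m k)"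
    with c[of k, unfolded pow_smult_mat[OF A] norm_bound_def] A
    have "s ^ k * norm ((A ^\<^sub>m k) $$ (i, j)) \<le> c"
      using s by (auto simp: norm_mult norm_power)
    with s show "norm ((A ^\<^sub>m k) $$ (i, j)) \<le> c * (1 / s) ^ k"
      by (simp add: field_simps power_divide)
  qed
  with s show ?thesis by (intro exI[of _ c] exI[of _ "1 / s"]) auto
qed

lemma real_spectral_radius_less_1_powers_decay:
  assumes A: "A \<in> carrier_mat n n" and radius: "real_spectral_radius A < 1"
  shows "\<exists>c r. 0 \<le> r \<and> r < 1 \<and> (\<forall>k. norm_bound (A ^\<^sub>m k) (c * r ^ k))"
proof -
  obtain c r where r: "0 \<le> r" "r < 1"
    and bound: "\<And>k. norm_bound (map_mat complex_of_real A ^\<^sub>m k) (c * r ^ k)"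
    using spectral_radius_less_1_powers_decay[of "map_mat complex_of_real A" n] A radius
    unfolding real_spectral_radius_def by auto
  have "norm_bound (A ^\<^sub>m k) (c * r ^ k)" for k
    using bound[of k] unfolding of_real_hom.mat_hom_pow[OF A, symmetric] norm_bound_def by auto
  with r show ?thesis by blast
qed

lemma pow_mat_Suc_left:
  assumes A: "A \<in> carrier_mat n n"
  shows "A ^\<^sub>m Suc k = A * A ^\<^sub>m k"
proof (induction k)
  case (Suc k)
  have "A ^\<^sub>m Suc (Suc k) = A * A ^\<^sub>m k * A"
    using Suc by simp
  also have "\<dots> = A * A ^\<^sub>m Suc k"
    using A by (simp add: assoc_mult_mat[of _ n n _ n])
  finally show ?case .
qed (use A in simp)

lemma mult_left_mono_mat:
  fixes N P Q :: "'a :: ordered_semiring_0 mat"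
  assumes N: "N \<in> carrier_mat n l" "0\<^sub>m n l \<le> N" and Q: "Q \<in> carrier_mat l m" and le: "P \<le> Q"
  shows "N * P \<le> N * Q"
proof -
  have P: "P \<in> carrier_mat l m"
    using le Q unfolding less_eq_mat_def by auto
  have "(N * P) $$ (i, j) \<le> (N * Q) $$ (i, j)" if "i < n" "j < m" for i j
    using that N P Q le unfolding less_eq_mat_def
    by (auto simp: scalar_prod_def intro!: sum_mono mult_left_mono)
  with N P Q show ?thesis unfolding less_eq_mat_def by auto
qed

lemma le_pow_mult_if_le_mult:
  fixes N :: "'a :: {ordered_semiring_0, semiring_1} mat"
  assumes N: "N \<in> carrier_mat n n" "0\<^sub>m n n \<le> N"
    and D: "\<And>k. D k \<in> carrier_mat n m" and step: "\<And>k. D (Suc k) \<le> N * D k"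
  shows "D k \<le> N ^\<^sub>m k * D 0"
proof (induction k)
  case 0
  show ?case using N D[of 0] by simp
next
  case (Suc k)
  have "D (Suc k) \<le> N * D k" by (fact step)
  also have "\<dots> \<le> N * (N ^\<^sub>m k * D 0)"
    using mult_left_mono_mat[OF N mult_carrier_mat[OF pow_carrier_mat[OF N(1)] D] Suc] .
  also have "\<dots> = N ^\<^sub>m Suc k * D 0"
    unfolding pow_mat_Suc_left[OF N(1)]
    by (rule assoc_mult_mat[OF N(1) pow_carrier_mat[OF N(1)] D, symmetric])
  finally show ?case .
qed

lemma geometric_norm_bound_if_le_mult:
  fixes N :: "real mat"
  assumes N: "N \<in> carrier_mat n n" "0\<^sub>m n n \<le> N" and decay: "\<And>k. norm_bound (N ^\<^sub>m k) (c * r ^ k)"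
    and D: "\<And>k. D k \<in> carrier_mat n m" "\<And>k. 0\<^sub>m n m \<le> D k" and step: "\<And>k. D (Suc k) \<le> N * D k"
  shows "\<exists>K. \<forall>k. norm_bound (D k) (K * r ^ k)"
proof -
  obtain b where b: "norm_bound (D 0) b"
    using norm_bound_max by blast
  have "norm_bound (D k) (c * b * n * r ^ k)" for k
  proof
    fix i j assume "i < dim_row (D k)" "j < dim_col (D k)"
    then have ij: "i < n" "j < m" using D(1)[of k] by auto
    have "norm (D k $$ (i, j)) \<le> (N ^\<^sub>m k * D 0) $$ (i, j)"
      using le_pow_mult_if_le_mult[of N n D m k, OF N D(1) step] D(2)[of k] D(1)[of k] ij
      unfolding less_eq_mat_def by auto
    also have "\<dots> \<le> c * r ^ k * b * n"
      using norm_bound_mult[OF pow_carrier_mat[OF N(1)] D(1) decay[of k] b] N(1) D(1)[of 0] ij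
      unfolding norm_bound_def real_norm_def by (auto dest: abs_le_D1)
    finally show "norm (D k $$ (i, j)) \<le> c * b * n * r ^ k"
      by (simp add: mult_ac)
  qed
  then show ?thesis by blast
qed

lemma convergent_if_geometric_increments:
  fixes x :: "nat \<Rightarrow> real"
  assumes incr: "\<And>k. \<bar>x (Suc k) - x k\<bar> \<le> K * r ^ k" and r: "0 \<le> r" "r < 1"
  shows "convergent x"
proof -
  have "summable (\<lambda>k. x (Suc k) - x k)"
    by (rule summable_comparison_test'[where N = 0, OF summable_mult[OF summable_geometric]])
      (use incr r in auto)
  then have "convergent (\<lambda>k. x k - x 0)"
    by (simp add: summable_iff_convergent sum_lessThan_telescope)
  then have "convergent (\<lambda>k. (x k - x 0) + x 0)"
    by (intro convergent_add convergent_const)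
  then show ?thesis by simp
qed

lemma abs_mat_carrier [simp]: "abs_mat X \<in> carrier_mat n m \<longleftrightarrow> X \<in> carrier_mat n m"
  unfolding abs_mat_def by simp

lemma dim_abs_mat [simp]: "dim_row (abs_mat X) = dim_row X" "dim_col (abs_mat X) = dim_col X"
  unfolding abs_mat_def by simp_all

lemma index_abs_mat [simp]:
  "i < dim_row X \<Longrightarrow> j < dim_col X \<Longrightarrow> abs_mat X $$ (i, j) = \<bar>X $$ (i, j)\<bar>"
  unfolding abs_mat_def by simp

lemma abs_mat_nonneg: "X \<in> carrier_mat n m \<Longrightarrow> 0\<^sub>m n m \<le> abs_mat X"
  unfolding less_eq_mat_def by auto

context
  fixes N :: "real mat" and T :: "real mat \<Rightarrow> real mat" and n m :: nat and c r :: real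
  assumes N: "N \<in> carrier_mat n n" "0\<^sub>m n n \<le> N"
    and decay: "\<And>k. norm_bound (N ^\<^sub>m k) (c * r ^ k)" and r: "0 \<le> r" "r < 1"
    and T_carrier: "\<And>X. X \<in> carrier_mat n m \<Longrightarrow> T X \<in> carrier_mat n m"
    and T_lipschitz: "\<And>X Y. X \<in> carrier_mat n m \<Longrightarrow> Y \<in> carrier_mat n m \<Longrightarrow>
      abs_mat (T X - T Y) \<le> N * abs_mat (X - Y)"
begin

lemma entrywise_contraction_fixpoint_unique:
  assumes X: "X \<in> carrier_mat n m" "T X = X" and Y: "Y \<in> carrier_mat n m" "T Y = Y"
  shows "X = Y"
proof -
  define D where "D = abs_mat (X - Y)"
  have D: "D \<in> carrier_mat n m" "0\<^sub>m n m \<le> D"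
    using abs_mat_nonneg[OF minus_carrier_mat[OF Y(1)], of X] Y(1) unfolding D_def by auto
  have "D \<le> N * D"
    using T_lipschitz[OF X(1) Y(1)] X Y unfolding D_def by simp
  then obtain K where K: "\<And>k. norm_bound D (K * r ^ k)"
    using geometric_norm_bound_if_le_mult[OF N decay, of "\<lambda>_. D" m] D by auto
  have "X $$ (i, j) = Y $$ (i, j)" if ij: "i < n" "j < m" for i j
  proof -
    have "(\<lambda>k. K * r ^ k) \<longlonglongrightarrow> 0"
      using r by (intro tendsto_mult_right_zero LIMSEQ_power_zero) auto
    moreover have "\<bar>X $$ (i, j) - Y $$ (i, j)\<bar> \<le> K * r ^ k" for k
      using K[of k] X Y ij unfolding norm_bound_def D_def by auto
    ultimately have "\<bar>X $$ (i, j) - Y $$ (i, j)\<bar> \<le> 0"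
      by (intro LIMSEQ_le_const) auto
    then show ?thesis by simp
  qed
  with X Y show ?thesis by (intro eq_matI) auto
qed

lemma entrywise_contraction_tendsto:
  assumes X: "\<And>k. X k \<in> carrier_mat n m" and L: "L \<in> carrier_mat n m"
    and lim: "\<And>i j. i < n \<Longrightarrow> j < m \<Longrightarrow> (\<lambda>k. X k $$ (i, j)) \<longlonglongrightarrow> L $$ (i, j)"
    and ij: "i < n" "j < m"
  shows "(\<lambda>k. T (X k) $$ (i, j)) \<longlonglongrightarrow> T L $$ (i, j)"
proof -
  have bound: "\<bar>T (X k) $$ (i, j) - T L $$ (i, j)\<bar>
      \<le> (\<Sum>l = 0..<n. N $$ (i, l) * \<bar>X k $$ (l, j) - L $$ (l, j)\<bar>)" for k
    using T_lipschitz[OF X L] T_carrier[OF X[of k]] T_carrier[OF L] X[of k] L N(1) ij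
    unfolding less_eq_mat_def by (auto simp: scalar_prod_def)
  have bound_lim: "(\<lambda>k. \<Sum>l = 0..<n. N $$ (i, l) * \<bar>X k $$ (l, j) - L $$ (l, j)\<bar>) \<longlonglongrightarrow> 0"
  proof (rule tendsto_null_sum)
    fix l assume "l \<in> {0..<n}"
    then show "(\<lambda>k. N $$ (i, l) * \<bar>X k $$ (l, j) - L $$ (l, j)\<bar>) \<longlonglongrightarrow> 0"
      using lim ij by (intro tendsto_mult_right_zero tendsto_rabs_zero LIM_zero) auto
  qed
  have "(\<lambda>k. \<bar>T (X k) $$ (i, j) - T L $$ (i, j)\<bar>) \<longlonglongrightarrow> 0"
    by (rule tendsto_sandwich[OF always_eventually always_eventually tendsto_const bound_lim])
      (simp_all add: bound)
  then show ?thesis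
    by (rule LIM_zero_cancel[OF tendsto_rabs_zero_cancel])
qed

lemma entrywise_contraction_fixpoint_exists:
  obtains L where "L \<in> carrier_mat n m" "T L = L"
proof -
  define Z where "Z k = (T ^^ k) (0\<^sub>m n m)" for k
  have Z: "Z k \<in> carrier_mat n m" for k
    by (induction k) (auto simp: Z_def T_carrier)
  have Z_Suc: "Z (Suc k) = T (Z k)" for k
    by (simp add: Z_def)
  define D where "D k = abs_mat (Z (Suc k) - Z k)" for k
  have D: "D k \<in> carrier_mat n m" "0\<^sub>m n m \<le> D k" for k
    using abs_mat_nonneg[OF minus_carrier_mat[OF Z[of k]]] Z[of k] unfolding D_def by auto
  have "D (Suc k) \<le> N * D k" for k
    using T_lipschitz[OF Z Z, of "Suc k" k] unfolding D_def Z_Suc .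
  then obtain K where K: "\<And>k. norm_bound (D k) (K * r ^ k)"
    using geometric_norm_bound_if_le_mult[of N n c r D m, OF N decay D(1) D(2)] by blast
  have conv: "convergent (\<lambda>k. Z k $$ (i, j))" if ij: "i < n" "j < m" for i j
  proof (rule convergent_if_geometric_increments[OF _ r])
    show "\<bar>Z (Suc k) $$ (i, j) - Z k $$ (i, j)\<bar> \<le> K * r ^ k" for k
      using K[of k] Z[of k] Z[of "Suc k"] ij unfolding norm_bound_def D_def by auto
  qed
  define L where "L = mat n m (\<lambda>(i, j). lim (\<lambda>k. Z k $$ (i, j)))"
  have L: "L \<in> carrier_mat n m"
    unfolding L_def by simp
  have lim: "(\<lambda>k. Z k $$ (i, j)) \<longlonglongrightarrow> L $$ (i, j)" if "i < n" "j < m" for i j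
    using conv[OF that] that
    unfolding L_def by (simp add: convergent_LIMSEQ_iff)
  have "T L = L"
  proof (rule eq_matI)
    fix i j assume "i < dim_row L" "j < dim_col L"
    then have ij: "i < n" "j < m" using L by auto
    have "(\<lambda>k. T (Z k) $$ (i, j)) \<longlonglongrightarrow> L $$ (i, j)"
      using LIMSEQ_Suc[OF lim[OF ij]] unfolding Z_Suc .
    with entrywise_contraction_tendsto[OF Z L lim ij] show "T L $$ (i, j) = L $$ (i, j)"
      by (rule LIMSEQ_unique)
  qed (use T_carrier[OF L] L in auto)
  with L that show ?thesis by blast
qed

lemma entrywise_contraction_ex1_fixpoint: "\<exists>!L. L \<in> carrier_mat n m \<and> T L = L"
  using entrywise_contraction_fixpoint_exists entrywise_contraction_fixpoint_unique by metis

end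

lemma abs_mat_mult_le:
  assumes P: "P \<in> carrier_mat n l" and Q: "Q \<in> carrier_mat l m"
  shows "abs_mat (P * Q) \<le> abs_mat P * abs_mat Q"
proof -
  have "\<bar>(P * Q) $$ (i, j)\<bar> \<le> (abs_mat P * abs_mat Q) $$ (i, j)" if "i < n" "j < m" for i j
    using that P Q by (auto simp: scalar_prod_def abs_mult intro: order.trans[OF sum_abs])
  with P Q show ?thesis unfolding less_eq_mat_def by auto
qed

lemma abs_mat_diff_abs_le:
  assumes X: "X \<in> carrier_mat n m" and Y: "Y \<in> carrier_mat n m"
  shows "abs_mat (abs_mat X - abs_mat Y) \<le> abs_mat (X - Y)"
  using X Y unfolding less_eq_mat_def by auto

lemma abs_residual_lipschitz:
  assumes G: "G \<in> carrier_mat n m" and M: "M \<in> carrier_mat n n"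
    and X: "X \<in> carrier_mat n m" and Y: "Y \<in> carrier_mat n m"
  shows "abs_mat ((G - M * abs_mat X) - (G - M * abs_mat Y)) \<le> abs_mat M * abs_mat (X - Y)"
proof -
  have "(G - M * abs_mat X) - (G - M * abs_mat Y) = M * (abs_mat Y - abs_mat X)"
    using G M X Y by (auto simp: mult_minus_distrib_mat intro!: eq_matI)
  then have "abs_mat ((G - M * abs_mat X) - (G - M * abs_mat Y))
      \<le> abs_mat M * abs_mat (abs_mat Y - abs_mat X)"
    using abs_mat_mult_le[OF M, of "abs_mat Y - abs_mat X" m] X by (simp add: minus_carrier_mat)
  also have "\<dots> \<le> abs_mat M * abs_mat (Y - X)"
    using mult_left_mono_mat[OF _ abs_mat_nonneg[OF M] _ abs_mat_diff_abs_le[OF Y X], of m] M X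
    by (simp add: minus_carrier_mat)
  also have "abs_mat (Y - X) = abs_mat (X - Y)"
    using X Y by (auto intro!: eq_matI)
  finally show ?thesis .
qed

context
  fixes A Ainv B C F :: "real mat" and n m :: nat
  assumes A: "A \<in> carrier_mat n n" and B: "B \<in> carrier_mat n n" and C: "C \<in> carrier_mat n n"
    and F: "F \<in> carrier_mat n m" and Ainv: "Ainv \<in> carrier_mat n n"
    and inverse: "A * Ainv = 1\<^sub>m n" "Ainv * A = 1\<^sub>m n"
begin

lemma abs_equation_iff:
  assumes X: "X \<in> carrier_mat n m"
  shows "A * X + B * abs_mat (C * X) = F \<longleftrightarrow> X = Ainv * (F - B * abs_mat (C * X))"
proof -
  define W where "W = B * abs_mat (C * X)"
  have W: "W \<in> carrier_mat n m"
    using B C X unfolding W_def by simp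
  have "A * X + W = F \<longleftrightarrow> A * X = F - W"
    using A X W F by (auto simp: mat_eq_iff eq_diff_eq)
  also have "\<dots> \<longleftrightarrow> X = Ainv * (F - W)"
  proof
    assume "A * X = F - W"
    then have "Ainv * (F - W) = Ainv * A * X"
      using Ainv A X by (simp add: assoc_mult_mat)
    with inverse X show "X = Ainv * (F - W)" by simp
  next
    assume "X = Ainv * (F - W)"
    then have "A * X = A * Ainv * (F - W)"
      using assoc_mult_mat[OF A Ainv minus_carrier_mat[OF W, of F]] by simp
    with inverse W show "A * X = F - W" by simp
  qed
  finally show ?thesis unfolding W_def .
qed

lemma mult_inverse_residual:
  assumes W: "W \<in> carrier_mat n m"
  shows "C * (Ainv * (F - B * W)) = C * Ainv * F - C * Ainv * B * W"
proof -
  have BW: "B * W \<in> carrier_mat n m"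
    using B W by simp
  have "C * (Ainv * (F - B * W)) = C * (Ainv * F) - C * (Ainv * (B * W))"
    using mult_minus_distrib_mat[OF Ainv F BW] mult_minus_distrib_mat[OF C, of "Ainv * F" m]
      Ainv F BW by simp
  also have "\<dots> = C * Ainv * F - C * Ainv * B * W"
    using B C F Ainv W by (simp add: assoc_mult_mat[of _ n n _ n _ m])
  finally show ?thesis .
qed

lemma ex1_abs_solution_if_ex1_fixpoint:
  assumes "\<exists>!Z. Z \<in> carrier_mat n m \<and> C * Ainv * F - C * Ainv * B * abs_mat Z = Z"
  shows "\<exists>!X. X \<in> carrier_mat n m \<and> A * X + B * abs_mat (C * X) = F"
proof -
  have fixpoint: "C * Ainv * F - C * Ainv * B * abs_mat (C * X) = C * X"
    if "X \<in> carrier_mat n m" "A * X + B * abs_mat (C * X) = F" for X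
    using that abs_equation_iff mult_inverse_residual[of "abs_mat (C * X)"] C
    by (metis abs_mat_carrier mult_carrier_mat)
  obtain Z where Z: "Z \<in> carrier_mat n m" "C * Ainv * F - C * Ainv * B * abs_mat Z = Z"
    using assms by blast
  define X where "X = Ainv * (F - B * abs_mat Z)"
  have X: "X \<in> carrier_mat n m"
    using Ainv B F Z unfolding X_def by (simp add: minus_carrier_mat)
  have "C * X = Z"
    using mult_inverse_residual[of "abs_mat Z"] Z unfolding X_def by simp
  then have solution: "A * X + B * abs_mat (C * X) = F"
    using abs_equation_iff[OF X] unfolding X_def by simp
  have "Y = X" if "Y \<in> carrier_mat n m" "A * Y + B * abs_mat (C * Y) = F" for Y
  proof -
    have "C * Y = Z"
      using assms fixpoint[OF that] Z C that(1) by (metis mult_carrier_mat)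
    with that abs_equation_iff show "Y = X" unfolding X_def by blast
  qed
  with X solution show ?thesis by blast
qed

end

theorem theorem4p6:
  fixes A Ainv B C F :: "real mat" and n :: nat
  assumes "A \<in> carrier_mat n n" "B \<in> carrier_mat n n" "C \<in> carrier_mat n n" "F \<in> carrier_mat n n"
    and "Ainv \<in> carrier_mat n n" "A * Ainv = 1\<^sub>m n" "Ainv * A = 1\<^sub>m n"
    and "real_spectral_radius (abs_mat (C * Ainv * B)) < 1"
  shows "\<exists>!X. X \<in> carrier_mat n n \<and> A * X + B * abs_mat (C * X) = F"
proof -
  define M where "M = C * Ainv * B"
  have M: "M \<in> carrier_mat n n"
    using assms(2,3,5) unfolding M_def by simp
  obtain c r where r: "0 \<le> r" "r < 1" and decay: "\<And>k. norm_bound (abs_mat M ^\<^sub>m k) (c * r ^ k)"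
    using real_spectral_radius_less_1_powers_decay[of "abs_mat M" n] M assms(8)
    unfolding M_def by auto
  have "\<exists>!Z. Z \<in> carrier_mat n n \<and> C * Ainv * F - M * abs_mat Z = Z"
  proof (rule entrywise_contraction_ex1_fixpoint[OF _ abs_mat_nonneg[OF M] decay r])
    show "C * Ainv * F - M * abs_mat Z \<in> carrier_mat n n" if "Z \<in> carrier_mat n n" for Z
      using that assms(3-5) M by (simp add: minus_carrier_mat)
    show "abs_mat ((C * Ainv * F - M * abs_mat X) - (C * Ainv * F - M * abs_mat Y))
        \<le> abs_mat M * abs_mat (X - Y)" if "X \<in> carrier_mat n n" "Y \<in> carrier_mat n n" for X Y
      using abs_residual_lipschitz[OF _ M that] assms(3-5) by simp
  qed (use M in simp)
  then show ?thesis
    using ex1_abs_solution_if_ex1_fixpoint[OF assms(1-7)] unfolding M_def by blast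
qed

end
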